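(* Let $X$ be a set of variables, $\mathbb{K}$ a field, $<$ an admissible (monomial) order on the set $[X]$ of monomials, and $I$ an ideal of $\mathbb{K}[X]$. Let $R=\{f_1,\dots,f_n\}$ be a finite set of nonzero polynomials generating $I$. Then $R$ is a Gröbner basis of $I$ (with respect to $<$) if and only if the set $F_R=\{T_1,\dots,T_n\}$ of reduction operators associated to $R$ is confluent.
   Context: A reduction operator relative to $([X],<)$ is an idempotent linear endomorphism $T$ of $\mathbb{K}[X]$ such that for every monomial $m$, either $T(m)=m$ or $T(m)$ is a linear combination of monomials strictly smaller than $m$. For every subspace $V$ of $\mathbb{K}[X]$ there is a unique reduction operator with kernel $V$. $F_R=\{T_1,\dots,T_n\}$ where $T_i$ is the reduction operator whose kernel is the ideal of $\mathbb{K}[X]$ generated by $f_i$. For a reduction operator $T$, $\mathrm{nf}(T)=\{m\in[X]\mid T(m)=m\}$. For a set $F$ of reduction operators, $\wedge F$ is the reduction operator whose kernel is $\sum_{T\in F}\ker T$, and $F$ is confluent if $\bigcap_{T\in F}\mathrm{nf}(T)=\mathrm{nf}(\wedge F)$. *)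

theory Defs
  imports "HOL-Library.Poly_Mapping"
begin

text \<open>Monomials over the variable type x are
  finitely supported maps from variables to nat; polynomials over the field 'k are finitely supported
  coefficient functions on monomials, with the convolution product of Poly_Mapping.\<close>

type_synonym 'x monom = "'x \<Rightarrow>\<^sub>0 nat"
type_synonym ('x, 'k) mpoly = "('x \<Rightarrow>\<^sub>0 nat) \<Rightarrow>\<^sub>0 'k"

definition mono :: "'x monom \<Rightarrow> ('x, 'k::zero_neq_one) mpoly" where
  "mono m = Poly_Mapping.single m 1"

definition scal :: "'k::comm_ring_1 \<Rightarrow> ('x, 'k) mpoly \<Rightarrow> ('x, 'k) mpoly" where
  "scal c p = Poly_Mapping.single 0 c * p"

definition admissible_order :: "('x monom \<Rightarrow> 'x monom \<Rightarrow> bool) \<Rightarrow> bool" where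
  "admissible_order lt \<longleftrightarrow>
     (\<forall>m. \<not> lt m m) \<and>
     (\<forall>a b c. lt a b \<longrightarrow> lt b c \<longrightarrow> lt a c) \<and>
     (\<forall>a b. a = b \<or> lt a b \<or> lt b a) \<and>
     wfP lt \<and>
     (\<forall>m. m \<noteq> 0 \<longrightarrow> lt 0 m) \<and>
     (\<forall>a b c. lt a b \<longrightarrow> lt (a + c) (b + c))"

definition lm :: "('x monom \<Rightarrow> 'x monom \<Rightarrow> bool) \<Rightarrow> ('x, 'k::zero) mpoly \<Rightarrow> 'x monom" where
  "lm lt p = (THE m. m \<in> Poly_Mapping.keys p \<and> (\<forall>m'\<in>Poly_Mapping.keys p. m' \<noteq> m \<longrightarrow> lt m' m))"

definition mdvd :: "'x monom \<Rightarrow> 'x monom \<Rightarrow> bool" where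
  "mdvd a b \<longleftrightarrow> (\<exists>t. b = a + t)"

definition ideal_gen :: "('x, 'k::comm_ring_1) mpoly set \<Rightarrow> ('x, 'k) mpoly set" where
  "ideal_gen S = {p. \<exists>A q. finite A \<and> A \<subseteq> S \<and> p = (\<Sum>g\<in>A. q g * g)}"

definition is_ideal :: "('x, 'k::comm_ring_1) mpoly set \<Rightarrow> bool" where
  "is_ideal I \<longleftrightarrow> 0 \<in> I \<and> (\<forall>p\<in>I. \<forall>q\<in>I. p + q \<in> I) \<and> (\<forall>p\<in>I. \<forall>r. r * p \<in> I)"

definition groebner_basis ::
  "('x monom \<Rightarrow> 'x monom \<Rightarrow> bool) \<Rightarrow> ('x, 'k::comm_ring_1) mpoly set \<Rightarrow> ('x, 'k) mpoly set \<Rightarrow> bool" where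
  "groebner_basis lt G I \<longleftrightarrow> G \<subseteq> I \<and>
     (\<forall>f\<in>I. f \<noteq> 0 \<longrightarrow> (\<exists>g\<in>G. g \<noteq> 0 \<and> mdvd (lm lt g) (lm lt f)))"

definition reduction_op ::
  "('x monom \<Rightarrow> 'x monom \<Rightarrow> bool) \<Rightarrow> (('x, 'k::field) mpoly \<Rightarrow> ('x, 'k) mpoly) \<Rightarrow> bool" where
  "reduction_op lt T \<longleftrightarrow>
     (\<forall>p q. T (p + q) = T p + T q) \<and>
     (\<forall>c p. T (scal c p) = scal c (T p)) \<and>
     (\<forall>p. T (T p) = T p) \<and>
     (\<forall>m. T (mono m) = mono m \<or> (\<forall>m'\<in>Poly_Mapping.keys (T (mono m)). lt m' m))"

definition ker :: "(('x, 'k::zero) mpoly \<Rightarrow> ('x, 'k) mpoly) \<Rightarrow> ('x, 'k) mpoly set" where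
  "ker T = {p. T p = 0}"

definition red_op_of ::
  "('x monom \<Rightarrow> 'x monom \<Rightarrow> bool) \<Rightarrow> ('x, 'k::field) mpoly set \<Rightarrow> (('x, 'k) mpoly \<Rightarrow> ('x, 'k) mpoly)" where
  "red_op_of lt V = (THE T. reduction_op lt T \<and> ker T = V)"

definition nf :: "(('x, 'k::zero_neq_one) mpoly \<Rightarrow> ('x, 'k) mpoly) \<Rightarrow> 'x monom set" where
  "nf T = {m. T (mono m) = mono m}"

definition sum_kernels ::
  "(('x, 'k::field) mpoly \<Rightarrow> ('x, 'k) mpoly) set \<Rightarrow> ('x, 'k) mpoly set" where
  "sum_kernels F = {p. \<exists>v. (\<forall>T\<in>F. v T \<in> ker T) \<and> p = (\<Sum>T\<in>F. v T)}"

definition wedge ::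
  "('x monom \<Rightarrow> 'x monom \<Rightarrow> bool) \<Rightarrow> (('x, 'k::field) mpoly \<Rightarrow> ('x, 'k) mpoly) set
     \<Rightarrow> (('x, 'k) mpoly \<Rightarrow> ('x, 'k) mpoly)" where
  "wedge lt F = red_op_of lt (sum_kernels F)"

definition confluent ::
  "('x monom \<Rightarrow> 'x monom \<Rightarrow> bool) \<Rightarrow> (('x, 'k::field) mpoly \<Rightarrow> ('x, 'k) mpoly) set \<Rightarrow> bool" where
  "confluent lt F \<longleftrightarrow> (\<Inter>T\<in>F. nf T) = nf (wedge lt F)"

definition F_R ::
  "('x monom \<Rightarrow> 'x monom \<Rightarrow> bool) \<Rightarrow> ('x, 'k::field) mpoly set \<Rightarrow> (('x, 'k) mpoly \<Rightarrow> ('x, 'k) mpoly) set" where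
  "F_R lt R = (\<lambda>f. red_op_of lt (ideal_gen {f})) ` R"

end

theory Submission
  imports Defs
begin

text \<open>A reduction operator T is determined by its kernel V: T p is the unique remainder of p
  modulo V none of whose monomials is a leading monomial of an element of V, and the normal
  monomials of T are exactly the monomials that are not such leading monomials.
  Leading monomials are additive under multiplication, so the leading monomials of the principal
  ideal (f) are the multiples of lm f. Hence the monomials that are normal for every T_f are
  those not divisible by any lm f, whereas the kernel of the wedge of F_R is the sum of the ideals
  (f), that is I, and its normal monomials are those outside lm(I). Confluence therefore says
  that lm(I) consists of the multiples of the lm f, which is the Groebner basis property.\<close>

section \<open>Leading monomials\<close>

locale monomial_order =
  fixes lt :: "'x monom \<Rightarrow> 'x monom \<Rightarrow> bool"
  assumes admissible: "admissible_order lt"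
begin

lemma lt_irrefl: "\<not> lt m m"
  and lt_trans: "lt a b \<Longrightarrow> lt b c \<Longrightarrow> lt a c"
  and lt_total: "a = b \<or> lt a b \<or> lt b a"
  and wf_lt: "wfP lt"
  and lt_add_right: "lt a b \<Longrightarrow> lt (a + c) (b + c)"
  using admissible unfolding admissible_order_def by blast+

lemma lt_add_left: "lt a b \<Longrightarrow> lt (c + a) (c + b)"
  using lt_add_right[of a b c] by (simp add: add.commute)

lemma lt_add_le:
  assumes "x = a \<or> lt x a" "y = b \<or> lt y b" "x \<noteq> a \<or> y \<noteq> b"
  shows "lt (x + y) (a + b)"
  using assms lt_add_left[of y b] lt_add_right[of x a] lt_trans by blast

lemma lm_eqI:
  assumes "m \<in> Poly_Mapping.keys p" "\<And>k. k \<in> Poly_Mapping.keys p \<Longrightarrow> k \<noteq> m \<Longrightarrow> lt k m"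
  shows "lm lt p = m"
  unfolding lm_def
proof (rule the_equality)
  fix m' assume m': "m' \<in> Poly_Mapping.keys p \<and> (\<forall>k\<in>Poly_Mapping.keys p. k \<noteq> m' \<longrightarrow> lt k m')"
  show "m' = m"
  proof (rule ccontr)
    assume "m' \<noteq> m"
    then have "lt m' m" "lt m m'" using assms m' by auto
    then show False using lt_trans lt_irrefl by blast
  qed
qed (use assms in blast)

lemma finite_has_max:
  assumes "finite S" "S \<noteq> {}"
  shows "\<exists>m\<in>S. \<forall>k\<in>S. k = m \<or> lt k m"
  using assms
proof (induction S rule: finite_ne_induct)
  case (insert x F)
  then obtain m where m: "m \<in> F" "\<forall>k\<in>F. k = m \<or> lt k m" by blast
  show ?case
  proof (cases "lt m x")
    case True
    then have "\<forall>k\<in>insert x F. k = x \<or> lt k x" using m(2) lt_trans[OF _ True] by auto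
    then show ?thesis by blast
  next
    case False
    then have "\<forall>k\<in>insert x F. k = m \<or> lt k m" using m(2) lt_total[of x m] by blast
    then show ?thesis using m(1) by blast
  qed
qed simp

lemma lm_in_keys: "p \<noteq> 0 \<Longrightarrow> lm lt p \<in> Poly_Mapping.keys p"
  and lt_lm: "k \<in> Poly_Mapping.keys p \<Longrightarrow> k \<noteq> lm lt p \<Longrightarrow> lt k (lm lt p)"
proof -
  have *: "lm lt p \<in> Poly_Mapping.keys p \<and>
      (\<forall>k\<in>Poly_Mapping.keys p. k \<noteq> lm lt p \<longrightarrow> lt k (lm lt p))"
    if "Poly_Mapping.keys p \<noteq> {}"
    using finite_has_max[OF finite_keys that] lm_eqI by metis
  show "p \<noteq> 0 \<Longrightarrow> lm lt p \<in> Poly_Mapping.keys p" using * by simp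
  show "k \<in> Poly_Mapping.keys p \<Longrightarrow> k \<noteq> lm lt p \<Longrightarrow> lt k (lm lt p)" using * by blast
qed

lemma lm_mono: "lm lt (mono t :: ('x, 'k::zero_neq_one) mpoly) = t"
  by (rule lm_eqI) (simp_all add: mono_def)

lemma lookup_mult_lm:
  fixes a b :: "('x, 'k::comm_semiring_1) mpoly"
  assumes "a \<noteq> 0"
  shows "Poly_Mapping.lookup (a * b) (lm lt a + lm lt b) =
    Poly_Mapping.lookup a (lm lt a) * Poly_Mapping.lookup b (lm lt b)"
proof -
  let ?A = "lm lt a" and ?B = "lm lt b"
  have "Poly_Mapping.lookup a l * (\<Sum>q. Poly_Mapping.lookup b q when ?A + ?B = l + q) =
      (Poly_Mapping.lookup a ?A * Poly_Mapping.lookup b ?B when l = ?A)" for l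
  proof (cases "l = ?A \<or> Poly_Mapping.lookup a l = 0")
    case False
    then have "l \<in> Poly_Mapping.keys a" "lt l ?A" using lt_lm by (auto simp: in_keys_iff)
    then have below: "lt (l + q) (?A + ?B)" if "q \<in> Poly_Mapping.keys b" for q
      using lt_add_le[of l ?A q ?B] lt_lm[of q b] that lt_irrefl by blast
    have "(Poly_Mapping.lookup b q when ?A + ?B = l + q) = 0" for q
    proof (cases "q \<in> Poly_Mapping.keys b")
      case True
      then have "?A + ?B \<noteq> l + q" using below lt_irrefl by metis
      then show ?thesis by simp
    qed (simp add: in_keys_iff)
    then show ?thesis using False by simp
  qed (auto simp: when_def)
  then show ?thesis by (simp add: lookup_mult)
qed

lemma lm_mult:
  fixes a b :: "('x, 'k::{comm_semiring_1, semiring_no_zero_divisors}) mpoly"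
  assumes "a \<noteq> 0" "b \<noteq> 0"
  shows "a * b \<noteq> 0" "lm lt (a * b) = lm lt a + lm lt b"
proof -
  have "Poly_Mapping.lookup (a * b) (lm lt a + lm lt b) \<noteq> 0"
    using lookup_mult_lm[OF assms(1)] lm_in_keys[OF assms(1)] lm_in_keys[OF assms(2)]
    by (simp add: in_keys_iff)
  then have top: "lm lt a + lm lt b \<in> Poly_Mapping.keys (a * b)" by (simp add: in_keys_iff)
  then show "a * b \<noteq> 0" by auto
  show "lm lt (a * b) = lm lt a + lm lt b"
  proof (rule lm_eqI[OF top])
    fix k assume "k \<in> Poly_Mapping.keys (a * b)" "k \<noteq> lm lt a + lm lt b"
    then show "lt k (lm lt a + lm lt b)"
      using keys_mult[of a b] lt_lm lt_add_le by blast
  qed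
qed

end

lemma lookup_scal: "Poly_Mapping.lookup (scal c p) m = c * Poly_Mapping.lookup p m"
  by (simp add: scal_def Poly_Mapping.map.rep_eq when_def flip: mult_map_scale_conv_mult)

lemma keys_scal_subset: "Poly_Mapping.keys (scal c p) \<subseteq> Poly_Mapping.keys p"
  by (auto simp: in_keys_iff lookup_scal)

lemma scal_diff: "scal c (p - q) = scal c p - scal c q"
  by (simp add: scal_def right_diff_distrib)

lemma lookup_mono: "Poly_Mapping.lookup (mono k) m = (1 when k = m)"
  by (simp add: mono_def lookup_single)

lemma poly_eq_sum_monomials:
  "p = (\<Sum>k\<in>Poly_Mapping.keys p. scal (Poly_Mapping.lookup p k) (mono k))"
proof (rule poly_mapping_eqI)
  fix m
  have "Poly_Mapping.lookup (\<Sum>k\<in>Poly_Mapping.keys p. scal (Poly_Mapping.lookup p k) (mono k)) m =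
      (\<Sum>k\<in>Poly_Mapping.keys p. if k = m then Poly_Mapping.lookup p k else 0)"
    by (simp add: lookup_sum lookup_scal lookup_mono mult_when) (simp add: when_def)
  then show "Poly_Mapping.lookup p m =
      Poly_Mapping.lookup (\<Sum>k\<in>Poly_Mapping.keys p. scal (Poly_Mapping.lookup p k) (mono k)) m"
    by (simp add: in_keys_iff)
qed

definition poly_subspace :: "('x, 'k::field) mpoly set \<Rightarrow> bool" where
  "poly_subspace V \<longleftrightarrow> 0 \<in> V \<and> (\<forall>p\<in>V. \<forall>q\<in>V. p + q \<in> V) \<and> (\<forall>c. \<forall>p\<in>V. scal c p \<in> V)"

lemma subspace_zero: "poly_subspace V \<Longrightarrow> 0 \<in> V"
  and subspace_add: "poly_subspace V \<Longrightarrow> p \<in> V \<Longrightarrow> q \<in> V \<Longrightarrow> p + q \<in> V"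
  and subspace_scal: "poly_subspace V \<Longrightarrow> p \<in> V \<Longrightarrow> scal c p \<in> V"
  unfolding poly_subspace_def by blast+

lemma subspace_diff:
  assumes "poly_subspace V" "p \<in> V" "q \<in> V"
  shows "p - q \<in> V"
proof -
  have "p - q = p + scal (-1) q" by (simp add: scal_def single_uminus)
  then show ?thesis using assms subspace_add subspace_scal by metis
qed

lemma poly_subspace_ideal:
  assumes "is_ideal I"
  shows "poly_subspace I"
  using assms unfolding is_ideal_def poly_subspace_def scal_def by blast

lemma ideal_gen_singleton: "ideal_gen {f} = range (\<lambda>q. q * f)"
proof (intro set_eqI iffI)
  fix p assume "p \<in> ideal_gen {f}"
  then obtain A q where A: "A \<subseteq> {f}" and p: "p = (\<Sum>g\<in>A. q g * g)"
    unfolding ideal_gen_def by auto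
  have "A = {} \<or> A = {f}" using subset_singletonD[OF A] .
  then have "p = 0 * f \<or> p = q f * f" using p by auto
  then show "p \<in> range (\<lambda>q. q * f)" by (metis rangeI)
next
  fix p assume "p \<in> range (\<lambda>q. q * f)"
  then obtain q where "p = (\<Sum>g\<in>{f}. (\<lambda>_. q) g * g)" by auto
  then show "p \<in> ideal_gen {f}"
    unfolding ideal_gen_def by (intro CollectI exI[of _ "{f}"] exI conjI) auto
qed

lemma ideal_gen_superset: "R \<subseteq> ideal_gen R"
proof
  fix f assume "f \<in> R"
  then have "finite {f} \<and> {f} \<subseteq> R \<and> f = (\<Sum>g\<in>{f}. (\<lambda>_. 1) g * g)" by simp
  then show "f \<in> ideal_gen R" unfolding ideal_gen_def by (intro CollectI exI)
qed

lemma ideal_sum: "is_ideal I \<Longrightarrow> (\<And>x. x \<in> A \<Longrightarrow> g x \<in> I) \<Longrightarrow> sum g A \<in> I"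
  by (induction A rule: infinite_finite_induct) (simp_all add: is_ideal_def)

lemma poly_subspace_multiples: "poly_subspace (range (\<lambda>q. q * (f :: ('x, 'k::field) mpoly)))"
  unfolding poly_subspace_def
proof (intro conjI ballI allI)
  show "0 \<in> range (\<lambda>q. q * f)" by (rule range_eqI[of _ _ 0]) simp
  fix p q assume "p \<in> range (\<lambda>q. q * f)" "q \<in> range (\<lambda>q. q * f)"
  then obtain u v where "p = u * f" "q = v * f" by blast
  then show "p + q \<in> range (\<lambda>q. q * f)" by (simp add: range_eqI[of _ _ "u + v"] distrib_right)
next
  fix c p assume "p \<in> range (\<lambda>q. q * f)"
  then obtain u where "p = u * f" by blast
  then show "scal c p \<in> range (\<lambda>q. q * f)"
    by (simp add: scal_def range_eqI[of _ _ "Poly_Mapping.single 0 c * u"] mult.assoc)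
qed

section \<open>Reduction operators and remainders\<close>

definition lead_monoms ::
  "('x monom \<Rightarrow> 'x monom \<Rightarrow> bool) \<Rightarrow> ('x, 'k::zero) mpoly set \<Rightarrow> 'x monom set" where
  "lead_monoms lt V = {lm lt v | v. v \<in> V \<and> v \<noteq> 0}"

lemma reduction_op_add: "reduction_op lt T \<Longrightarrow> T (p + q) = T p + T q"
  and reduction_op_scal: "reduction_op lt T \<Longrightarrow> T (scal c p) = scal c (T p)"
  and reduction_op_idem: "reduction_op lt T \<Longrightarrow> T (T p) = T p"
  and reduction_op_mono:
    "reduction_op lt T \<Longrightarrow> m \<notin> nf T \<Longrightarrow> k \<in> Poly_Mapping.keys (T (mono m)) \<Longrightarrow> lt k m"
  unfolding reduction_op_def nf_def by blast+

lemma reduction_op_zero: "reduction_op lt T \<Longrightarrow> T 0 = 0"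
  using reduction_op_add[of lt T 0 0] by simp

lemma reduction_op_diff: "reduction_op lt T \<Longrightarrow> T (p - q) = T p - T q"
  using reduction_op_add[of lt T "p - q" q] by simp

lemma reduction_op_sum: "reduction_op lt T \<Longrightarrow> T (\<Sum>k\<in>A. f k) = (\<Sum>k\<in>A. T (f k))"
  by (induction A rule: infinite_finite_induct) (simp_all add: reduction_op_zero reduction_op_add)

lemma poly_subspace_ker:
  assumes "reduction_op lt T"
  shows "poly_subspace (ker T)"
  using assms
  by (simp add: poly_subspace_def ker_def reduction_op_zero reduction_op_add reduction_op_scal)
    (simp add: scal_def)

context monomial_order
begin

lemma lookup_reduction_op:
  assumes T: "reduction_op lt T"
    and below: "\<And>k. k \<in> Poly_Mapping.keys q \<Longrightarrow> k \<notin> nf T \<Longrightarrow> k = m \<or> lt k m"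
  shows "Poly_Mapping.lookup (T q) m = (if m \<in> nf T then Poly_Mapping.lookup q m else 0)"
proof -
  have "T q = (\<Sum>k\<in>Poly_Mapping.keys q. scal (Poly_Mapping.lookup q k) (T (mono k)))"
    by (subst poly_eq_sum_monomials) (simp add: reduction_op_sum[OF T] reduction_op_scal[OF T])
  then have "Poly_Mapping.lookup (T q) m =
      (\<Sum>k\<in>Poly_Mapping.keys q. Poly_Mapping.lookup q k * Poly_Mapping.lookup (T (mono k)) m)"
    by (simp add: lookup_sum lookup_scal)
  also have "\<dots> = (\<Sum>k\<in>Poly_Mapping.keys q. if k = m \<and> m \<in> nf T then Poly_Mapping.lookup q k else 0)"
  proof (rule sum.cong)
    fix k assume k: "k \<in> Poly_Mapping.keys q"
    show "Poly_Mapping.lookup q k * Poly_Mapping.lookup (T (mono k)) m =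
        (if k = m \<and> m \<in> nf T then Poly_Mapping.lookup q k else 0)"
    proof (cases "k \<in> nf T")
      case False
      \<comment> \<open>T (mono k) only involves monomials below k, and k is not above m\<close>
      have "m \<notin> Poly_Mapping.keys (T (mono k))"
        using reduction_op_mono[OF T False] below[OF k False] lt_irrefl lt_trans by blast
      then show ?thesis using False by (auto simp: in_keys_iff)
    qed (auto simp: nf_def lookup_mono when_def)
  qed simp
  also have "\<dots> = (if m \<in> nf T then Poly_Mapping.lookup q m else 0)"
    by (simp add: sum.delta' in_keys_iff)
  finally show ?thesis .
qed

lemma keys_reduction_op_subset_nf:
  assumes T: "reduction_op lt T"
  shows "Poly_Mapping.keys (T p) \<subseteq> nf T"
proof (rule ccontr)
  assume "\<not> ?thesis"
  then obtain m where m: "m \<in> Poly_Mapping.keys (T p) - nf T"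
    and max: "\<forall>k\<in>Poly_Mapping.keys (T p) - nf T. k = m \<or> lt k m"
    using finite_has_max[of "Poly_Mapping.keys (T p) - nf T"] by auto
  have "Poly_Mapping.lookup (T (T p)) m = 0"
    using lookup_reduction_op[OF T, of "T p" m] m max by auto
  then show False using m by (simp add: reduction_op_idem[OF T] in_keys_iff)
qed

lemma nf_disjoint_lead_monoms_ker:
  assumes T: "reduction_op lt T"
  shows "nf T \<inter> lead_monoms lt (ker T) = {}"
proof -
  have "lm lt v \<notin> nf T" if "T v = 0" "v \<noteq> 0" for v
  proof
    assume "lm lt v \<in> nf T"
    then have "Poly_Mapping.lookup (T v) (lm lt v) = Poly_Mapping.lookup v (lm lt v)"
      using lookup_reduction_op[OF T, of v "lm lt v"] lt_lm by auto
    then show False using that lm_in_keys[OF that(2)] by (simp add: in_keys_iff)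
  qed
  then show ?thesis by (auto simp: lead_monoms_def ker_def)
qed

definition remainder :: "('x, 'k::field) mpoly set \<Rightarrow> ('x, 'k) mpoly \<Rightarrow> ('x, 'k) mpoly \<Rightarrow> bool" where
  "remainder V p r \<longleftrightarrow> p - r \<in> V \<and> Poly_Mapping.keys r \<inter> lead_monoms lt V = {}"

lemma remainder_unique:
  assumes V: "poly_subspace V" and "remainder V p r" "remainder V p r'"
  shows "r = r'"
proof (rule ccontr)
  assume "r \<noteq> r'"
  have "r - r' = (p - r') - (p - r)" by simp
  then have "r - r' \<in> V" using subspace_diff[OF V] assms(2,3) unfolding remainder_def by metis
  with \<open>r \<noteq> r'\<close> have "lm lt (r - r') \<in> lead_monoms lt V" by (auto simp: lead_monoms_def)
  moreover have "lm lt (r - r') \<in> Poly_Mapping.keys r \<union> Poly_Mapping.keys r'"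
    using lm_in_keys[of "r - r'"] keys_diff[of r r'] \<open>r \<noteq> r'\<close> by auto
  ultimately show False using assms(2,3) unfolding remainder_def by blast
qed

lemma remainder_add:
  assumes V: "poly_subspace V" and "remainder V p r" "remainder V q s"
  shows "remainder V (p + q) (r + s)"
proof -
  have "(p - r) + (q - s) \<in> V" using assms subspace_add[OF V] unfolding remainder_def by blast
  moreover have "(p + q) - (r + s) = (p - r) + (q - s)" by (simp add: algebra_simps)
  ultimately have "(p + q) - (r + s) \<in> V" by metis
  then show ?thesis using assms keys_add[of r s] unfolding remainder_def by blast
qed

lemma remainder_scal:
  assumes V: "poly_subspace V" and "remainder V p r"
  shows "remainder V (scal c p) (scal c r)"
  using assms subspace_scal[OF V] keys_scal_subset[of c r]
  unfolding remainder_def scal_diff[symmetric] by blast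

lemma remainder_reduction_op:
  assumes T: "reduction_op lt T"
  shows "remainder (ker T) p (T p)"
  using keys_reduction_op_subset_nf[OF T] nf_disjoint_lead_monoms_ker[OF T]
  by (auto simp: remainder_def ker_def reduction_op_diff[OF T] reduction_op_idem[OF T])

lemma reduction_op_unique:
  assumes "reduction_op lt T" "reduction_op lt T'" "ker T = ker T'"
  shows "T = T'"
proof
  fix p show "T p = T' p"
    using remainder_unique[OF poly_subspace_ker[OF assms(1)]] remainder_reduction_op[OF assms(1)]
      remainder_reduction_op[OF assms(2)] assms(3) by metis
qed

text \<open>One step of the division algorithm: the top monomial M of p is either cancelled by
  an element of V having M as leading monomial, or moved into the remainder.\<close>
lemma remainder_step:
  assumes V: "poly_subspace V" and p: "\<forall>k\<in>Poly_Mapping.keys p. k = M \<or> lt k M"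
  obtains p' r0 where "\<forall>k\<in>Poly_Mapping.keys p'. lt k M" "remainder V (p - p') r0"
proof (cases "M \<in> lead_monoms lt V")
  case False
  let ?r0 = "Poly_Mapping.single M (Poly_Mapping.lookup p M)"
  have "\<forall>k\<in>Poly_Mapping.keys (p - ?r0). lt k M"
  proof
    fix k assume "k \<in> Poly_Mapping.keys (p - ?r0)"
    then have "k \<noteq> M" "k \<in> Poly_Mapping.keys p"
      by (auto simp: in_keys_iff lookup_minus lookup_single when_def split: if_splits)
    then show "lt k M" using p by blast
  qed
  moreover have "remainder V (p - (p - ?r0)) ?r0"
    using False subspace_zero[OF V] by (auto simp: remainder_def)
  ultimately show ?thesis by (rule that)
next
  case True
  then obtain v where v: "v \<in> V" "v \<noteq> 0" "lm lt v = M" by (auto simp: lead_monoms_def)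
  let ?w = "scal (Poly_Mapping.lookup p M / Poly_Mapping.lookup v M) v"
  have "Poly_Mapping.lookup v M \<noteq> 0" using lm_in_keys[OF v(2)] v(3) by (simp add: in_keys_iff)
  have "\<forall>k\<in>Poly_Mapping.keys (p - ?w). lt k M"
  proof
    fix k assume k: "k \<in> Poly_Mapping.keys (p - ?w)"
    then have "k \<noteq> M"
      using \<open>Poly_Mapping.lookup v M \<noteq> 0\<close> by (auto simp: in_keys_iff lookup_minus lookup_scal)
    moreover have "k \<in> Poly_Mapping.keys p \<or> k \<in> Poly_Mapping.keys v"
      using k by (auto simp: in_keys_iff lookup_minus lookup_scal)
    ultimately show "lt k M" using p lt_lm[of k v] v(3) by blast
  qed
  moreover have "remainder V (p - (p - ?w)) 0"
    using subspace_scal[OF V v(1)] by (simp add: remainder_def)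
  ultimately show ?thesis by (rule that)
qed

lemma remainder_exists:
  assumes V: "poly_subspace V"
  shows "\<exists>r. remainder V p r"
proof -
  have "\<exists>r. remainder V p r" if "\<forall>k\<in>Poly_Mapping.keys p. k = M \<or> lt k M" for p M
    using wf_lt that
  proof (induction M arbitrary: p rule: wfp_induct_rule)
    case (less M)
    obtain p' r0 where p': "\<forall>k\<in>Poly_Mapping.keys p'. lt k M" and r0: "remainder V (p - p') r0"
      using remainder_step[OF V less.prems] .
    obtain r' where r': "remainder V p' r'"
    proof (cases "p' = 0")
      case True
      then show ?thesis using that[of 0] subspace_zero[OF V] by (simp add: remainder_def)
    next
      case False
      then show ?thesis using that less.IH[of "lm lt p'" p'] p' lm_in_keys lt_lm by blast
    qed
    have "remainder V (p' + (p - p')) (r' + r0)" using remainder_add[OF V r' r0] .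
    then show ?case by auto
  qed
  then show ?thesis using lt_lm by blast
qed

lemma remainder_mono:
  assumes V: "poly_subspace V" and r: "remainder V (mono m) r"
  shows "r = mono m \<or> (\<forall>k\<in>Poly_Mapping.keys r. lt k m)"
proof (cases "m \<in> lead_monoms lt V")
  case False
  then have "remainder V (mono m) (mono m)"
    using subspace_zero[OF V] by (simp add: remainder_def mono_def)
  then show ?thesis using remainder_unique[OF V r] by simp
next
  case True
  let ?w = "mono m - r"
  have r_disj: "Poly_Mapping.keys r \<inter> lead_monoms lt V = {}" and "?w \<in> V"
    using r by (simp_all add: remainder_def)
  then have "m \<notin> Poly_Mapping.keys r" using True by blast
  then have keys_r: "Poly_Mapping.keys r \<subseteq> Poly_Mapping.keys ?w - {m}"
    by (auto simp: in_keys_iff lookup_minus lookup_mono when_def)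
  have "?w \<noteq> 0"
  proof
    assume "?w = 0"
    then have "r = mono m" by simp
    then show False using \<open>m \<notin> Poly_Mapping.keys r\<close> by (simp add: mono_def)
  qed
  then have "lm lt ?w \<in> lead_monoms lt V"
    using \<open>?w \<in> V\<close> unfolding lead_monoms_def by blast
  moreover have "lm lt ?w \<in> insert m (Poly_Mapping.keys r)"
    using lm_in_keys[OF \<open>?w \<noteq> 0\<close>] keys_diff[of "mono m" r] by (auto simp: mono_def)
  ultimately have "lm lt ?w = m" using r_disj by blast
  then show ?thesis using keys_r lt_lm[of _ ?w] by auto
qed

lemma nf_reduction_op:
  assumes T: "reduction_op lt T"
  shows "nf T = - lead_monoms lt (ker T)"
proof (intro set_eqI iffI)
  fix m assume "m \<in> - lead_monoms lt (ker T)"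
  moreover have "mono m - mono m \<in> ker T" using reduction_op_zero[OF T] by (simp add: ker_def)
  ultimately have "remainder (ker T) (mono m) (mono m)" by (simp add: remainder_def mono_def)
  then have "T (mono m) = mono m"
    by (rule remainder_unique[OF poly_subspace_ker[OF T] remainder_reduction_op[OF T]])
  then show "m \<in> nf T" by (simp add: nf_def)
next
  fix m assume "m \<in> nf T"
  then show "m \<in> - lead_monoms lt (ker T)" using nf_disjoint_lead_monoms_ker[OF T] by blast
qed

lemma exists_reduction_op:
  assumes V: "poly_subspace V"
  shows "\<exists>T. reduction_op lt T \<and> ker T = V"
proof -
  define T where "T p = (THE r. remainder V p r)" for p
  have rem: "remainder V p (T p)" for p
    unfolding T_def using remainder_exists[OF V] remainder_unique[OF V] by (metis theI)
  have T_eqI: "T p = r" if "remainder V p r" for p r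
    using remainder_unique[OF V rem that] .
  have "reduction_op lt T"
    unfolding reduction_op_def
  proof (intro conjI allI)
    fix p q
    show "T (p + q) = T p + T q" using T_eqI remainder_add[OF V rem rem] .
  next
    fix c p
    show "T (scal c p) = scal c (T p)" using T_eqI remainder_scal[OF V rem] .
  next
    fix p
    show "T (T p) = T p"
      using rem[of p] subspace_zero[OF V] by (intro T_eqI) (simp add: remainder_def)
  next
    fix m
    show "T (mono m) = mono m \<or> (\<forall>m'\<in>Poly_Mapping.keys (T (mono m)). lt m' m)"
      using remainder_mono[OF V rem] .
  qed
  moreover have "ker T = V"
  proof (intro set_eqI iffI)
    fix p assume "p \<in> V"
    then have "remainder V p 0" by (simp add: remainder_def)
    then show "p \<in> ker T" using T_eqI by (simp add: ker_def)
  next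
    fix p assume "p \<in> ker T"
    then show "p \<in> V" using rem[of p] by (simp add: ker_def remainder_def)
  qed
  ultimately show ?thesis by blast
qed

lemma
  assumes "poly_subspace V"
  shows reduction_op_red_op_of: "reduction_op lt (red_op_of lt V)"
    and ker_red_op_of: "ker (red_op_of lt V) = V"
proof -
  obtain T where T: "reduction_op lt T" "ker T = V" using exists_reduction_op[OF assms] by blast
  have "red_op_of lt V = T"
    unfolding red_op_of_def
    by (rule the_equality) (use T reduction_op_unique in \<open>blast, metis\<close>)
  then show "reduction_op lt (red_op_of lt V)" "ker (red_op_of lt V) = V" using T by simp_all
qed

end

section \<open>The reduction operators of a generating set\<close>

lemma zero_in_sum_kernels:
  assumes "\<And>T. T \<in> F \<Longrightarrow> poly_subspace (ker T)"
  shows "0 \<in> sum_kernels F"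
  unfolding sum_kernels_def using assms subspace_zero by (intro CollectI exI[of _ "\<lambda>_. 0"]) auto

lemma sum_kernels_add:
  assumes "\<And>T. T \<in> F \<Longrightarrow> poly_subspace (ker T)"
    and "p \<in> sum_kernels F" "q \<in> sum_kernels F"
  shows "p + q \<in> sum_kernels F"
proof -
  obtain v w where v: "\<forall>T\<in>F. v T \<in> ker T" "p = (\<Sum>T\<in>F. v T)"
    and w: "\<forall>T\<in>F. w T \<in> ker T" "q = (\<Sum>T\<in>F. w T)"
    using assms(2,3) unfolding sum_kernels_def by blast
  have "\<forall>T\<in>F. v T + w T \<in> ker T" using v(1) w(1) assms(1) subspace_add by blast
  moreover have "p + q = (\<Sum>T\<in>F. v T + w T)" using v(2) w(2) by (simp add: sum.distrib)
  ultimately show ?thesis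
    unfolding sum_kernels_def by (intro CollectI exI[of _ "\<lambda>T. v T + w T"] conjI)
qed

lemma ker_subset_sum_kernels:
  assumes "finite F" "\<And>T. T \<in> F \<Longrightarrow> poly_subspace (ker T)" "T \<in> F"
  shows "ker T \<subseteq> sum_kernels F"
proof
  fix p assume "p \<in> ker T"
  then have "\<forall>T'\<in>F. (if T' = T then p else 0) \<in> ker T'" using assms(2) subspace_zero by auto
  moreover have "p = (\<Sum>T'\<in>F. if T' = T then p else 0)" using assms(1,3) by (simp add: sum.delta')
  ultimately show "p \<in> sum_kernels F"
    unfolding sum_kernels_def by (intro CollectI exI[of _ "\<lambda>T'. if T' = T then p else 0"] conjI)
qed

lemma sum_kernels_principal:
  fixes T :: "('x, 'k::field) mpoly \<Rightarrow> (('x, 'k) mpoly \<Rightarrow> ('x, 'k) mpoly)"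
  assumes I: "is_ideal I" "I = ideal_gen R" and "finite R"
    and ker: "\<And>f. f \<in> R \<Longrightarrow> ker (T f) = range (\<lambda>q. q * f)"
  shows "sum_kernels (T ` R) = I"
proof
  have sub: "poly_subspace (ker T')" if "T' \<in> T ` R" for T'
    using that ker poly_subspace_multiples by auto
  show "sum_kernels (T ` R) \<subseteq> I"
  proof
    fix p assume "p \<in> sum_kernels (T ` R)"
    then obtain v where v: "\<forall>T'\<in>T ` R. v T' \<in> ker T'" "p = (\<Sum>T'\<in>T ` R. v T')"
      unfolding sum_kernels_def by blast
    have "v T' \<in> I" if T': "T' \<in> T ` R" for T'
    proof -
      obtain f where f: "f \<in> R" "T' = T f" using T' by blast
      then have "v T' \<in> range (\<lambda>q. q * f)" using v(1) T' ker by auto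
      then obtain q where "v T' = q * f" by blast
      moreover have "f \<in> I" using f(1) I(2) ideal_gen_superset by blast
      ultimately show ?thesis using I(1) unfolding is_ideal_def by auto
    qed
    then show "p \<in> I" using ideal_sum[OF I(1)] v(2) by metis
  qed
  show "I \<subseteq> sum_kernels (T ` R)"
  proof
    fix p assume "p \<in> I"
    then obtain A q where A: "finite A" "A \<subseteq> R" and p: "p = (\<Sum>g\<in>A. q g * g)"
      unfolding I(2) ideal_gen_def by blast
    have gen: "q g * g \<in> sum_kernels (T ` R)" if "g \<in> R" for g
      using ker_subset_sum_kernels[of "T ` R" "T g"] \<open>finite R\<close> sub ker[OF that] that by blast
    show "p \<in> sum_kernels (T ` R)" unfolding p using A
    proof (induction A rule: finite_induct)
      case empty
      then show ?case using zero_in_sum_kernels[OF sub] by simp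
    next
      case (insert g A)
      then show ?case using sum_kernels_add[OF sub gen] by simp
    qed
  qed
qed

definition lm_multiples ::
  "('x monom \<Rightarrow> 'x monom \<Rightarrow> bool) \<Rightarrow> ('x, 'k::zero) mpoly set \<Rightarrow> 'x monom set" where
  "lm_multiples lt R = {m. \<exists>f\<in>R. mdvd (lm lt f) m}"

lemma groebner_basis_iff_lead_monoms:
  assumes "R \<subseteq> I" "0 \<notin> R"
  shows "groebner_basis lt R I \<longleftrightarrow> lead_monoms lt I \<subseteq> lm_multiples lt R"
proof
  assume G: "groebner_basis lt R I"
  show "lead_monoms lt I \<subseteq> lm_multiples lt R"
  proof
    fix m assume "m \<in> lead_monoms lt I"
    then obtain h where "h \<in> I" "h \<noteq> 0" "m = lm lt h" by (auto simp: lead_monoms_def)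
    then show "m \<in> lm_multiples lt R" using G by (auto simp: groebner_basis_def lm_multiples_def)
  qed
next
  assume L: "lead_monoms lt I \<subseteq> lm_multiples lt R"
  have "\<exists>g\<in>R. g \<noteq> 0 \<and> mdvd (lm lt g) (lm lt f)" if "f \<in> I" "f \<noteq> 0" for f
  proof -
    have "lm lt f \<in> lm_multiples lt R" using L that by (auto simp: lead_monoms_def)
    then obtain g where "g \<in> R" "mdvd (lm lt g) (lm lt f)" by (auto simp: lm_multiples_def)
    moreover have "g \<noteq> 0" using \<open>g \<in> R\<close> assms(2) by auto
    ultimately show ?thesis by blast
  qed
  then show "groebner_basis lt R I" using assms(1) by (simp add: groebner_basis_def)
qed

context monomial_order
begin

lemma lead_monoms_multiples:
  fixes f :: "('x, 'k::{comm_semiring_1, semiring_no_zero_divisors}) mpoly"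
  assumes "f \<noteq> 0"
  shows "lead_monoms lt (range (\<lambda>q. q * f)) = {m. mdvd (lm lt f) m}"
proof (intro set_eqI iffI)
  fix m assume "m \<in> lead_monoms lt (range (\<lambda>q. q * f))"
  then obtain q where q: "q * f \<noteq> 0" "m = lm lt (q * f)" by (auto simp: lead_monoms_def)
  then have "q \<noteq> 0" by auto
  then have "m = lm lt f + lm lt q" using lm_mult(2)[OF _ assms] q(2) by (simp add: add.commute)
  then show "m \<in> {m. mdvd (lm lt f) m}" by (auto simp: mdvd_def)
next
  fix m assume "m \<in> {m. mdvd (lm lt f) m}"
  then obtain t where t: "m = lm lt f + t" by (auto simp: mdvd_def)
  have "Poly_Mapping.keys (mono t :: ('x, 'k) mpoly) = {t}" by (simp add: mono_def)
  then have "mono t \<noteq> (0 :: ('x, 'k) mpoly)" by auto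
  then have "mono t * f \<noteq> 0" "lm lt (mono t * f) = t + lm lt f"
    using lm_mult[OF _ assms] lm_mono by simp_all
  moreover have "t + lm lt f = m" using t by (simp add: add.commute)
  ultimately have "mono t * f \<noteq> 0" "lm lt (mono t * f) = m" by simp_all
  then show "m \<in> lead_monoms lt (range (\<lambda>q. q * f))"
    unfolding lead_monoms_def by (intro CollectI exI[of _ "mono t * f"]) auto
qed

lemma ker_red_op_of_principal: "ker (red_op_of lt (ideal_gen {f})) = range (\<lambda>q. q * f)"
  using ker_red_op_of[OF poly_subspace_multiples] by (simp add: ideal_gen_singleton)

lemma Inter_nf_F_R:
  assumes "0 \<notin> R"
  shows "(\<Inter>T\<in>F_R lt R. nf T) = - lm_multiples lt R"
proof -
  have "nf (red_op_of lt (ideal_gen {f})) = - {m. mdvd (lm lt f) m}" if "f \<in> R" for f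
  proof -
    have "f \<noteq> 0" using that assms by auto
    have "nf (red_op_of lt (ideal_gen {f})) = - lead_monoms lt (range (\<lambda>q. q * f))"
      using nf_reduction_op[OF reduction_op_red_op_of[OF poly_subspace_multiples[of f]]]
        ker_red_op_of_principal[of f] by (simp add: ideal_gen_singleton)
    then show ?thesis using lead_monoms_multiples[OF \<open>f \<noteq> 0\<close>] by simp
  qed
  then show ?thesis unfolding F_R_def lm_multiples_def by auto
qed

lemma nf_wedge_F_R:
  assumes "is_ideal I" "I = ideal_gen R" "finite R"
  shows "nf (wedge lt (F_R lt R)) = - lead_monoms lt I"
proof -
  have "sum_kernels (F_R lt R) = I"
    unfolding F_R_def by (rule sum_kernels_principal[OF assms ker_red_op_of_principal])
  then show ?thesis
    unfolding wedge_def using nf_reduction_op reduction_op_red_op_of ker_red_op_of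
      poly_subspace_ideal[OF assms(1)] by metis
qed

lemma lm_multiples_subset_lead_monoms:
  fixes I R :: "('x, 'k::idom) mpoly set"
  assumes "is_ideal I" "R \<subseteq> I" "0 \<notin> R"
  shows "lm_multiples lt R \<subseteq> lead_monoms lt I"
proof
  fix m assume "m \<in> lm_multiples lt R"
  then obtain f where f: "f \<in> R" "mdvd (lm lt f) m" by (auto simp: lm_multiples_def)
  have "f \<noteq> 0" using f(1) assms(3) by auto
  then have "m \<in> lead_monoms lt (range (\<lambda>q. q * f))" using lead_monoms_multiples f(2) by blast
  then obtain q where "q * f \<noteq> 0" "m = lm lt (q * f)" by (auto simp: lead_monoms_def)
  moreover have "q * f \<in> I" using assms f(1) unfolding is_ideal_def by blast
  ultimately show "m \<in> lead_monoms lt I" unfolding lead_monoms_def by blast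
qed

end

theorem mainTheorem9:
  fixes lt :: "'x monom \<Rightarrow> 'x monom \<Rightarrow> bool"
    and I R :: "('x, 'k::field) mpoly set"
  assumes "admissible_order lt"
    and "is_ideal I"
    and "finite R"
    and "0 \<notin> R"
    and "I = ideal_gen R"
  shows "groebner_basis lt R I \<longleftrightarrow> confluent lt (F_R lt R)"
proof -
  interpret monomial_order lt by (rule monomial_order.intro) fact
  have "R \<subseteq> I" using assms(5) ideal_gen_superset by blast
  have "confluent lt (F_R lt R) \<longleftrightarrow> - lm_multiples lt R = - lead_monoms lt I"
    unfolding confluent_def Inter_nf_F_R[OF assms(4)] nf_wedge_F_R[OF assms(2,5,3)] ..
  also have "\<dots> \<longleftrightarrow> lead_monoms lt I \<subseteq> lm_multiples lt R"
    using lm_multiples_subset_lead_monoms[OF assms(2) \<open>R \<subseteq> I\<close> assms(4)] by blast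
  also have "\<dots> \<longleftrightarrow> groebner_basis lt R I"
    using groebner_basis_iff_lead_monoms[OF \<open>R \<subseteq> I\<close> assms(4)] by simp
  finally show ?thesis by simp
qed

end
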